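(* Work in a polymorphically typed functional language (a polymorphic lambda-calculus with Haskell-like datatypes; possibly with undefinedness $\bot$ and partial functions, and possibly with Haskell's $\mathit{seq}$) for which the relational parametricity theorem holds. Let $\tau$, $\tau_1$, $\tau_2$ be closed types, and let $g :: \tau_1 \to \tau_2$ be a closed term which is (i) strict, if the language setting includes partially defined functions, and (ii) strict and total, if the language setting includes $\mathit{seq}$. Let $e :: \tau$ be a term which may involve the type variable $\alpha$ (but $\alpha$ does not occur in its overall type $\tau$, which is closed) and which may contain the term variables $\mathit{pre} :: \tau_1 \to \alpha$ and $\mathit{post} :: \alpha \to \tau_2$, but no other free (type or term) variables. Then \[ e[\tau_1/\alpha,\ \mathit{id}_{\tau_1}/\mathit{pre},\ g/\mathit{post}] \;=\; e[\tau_2/\alpha,\ g/\mathit{pre},\ \mathit{id}_{\tau_2}/\mathit{post}], \] where $e[\cdot/\cdot]$ denotes simultaneous substitution and $=$ is semantic equality.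
   Context: The relational parametricity theorem (fundamental lemma of logical relations) is assumed to hold for the language: types are interpreted as relations $\Delta_{\rho,\sigma}$, with base types as identity relations, function types via $(f,g)\in \mathcal{R}_1\to\mathcal{R}_2$ iff $f$ maps $\mathcal{R}_1$-related arguments to $\mathcal{R}_2$-related results (with the additional requirement $f=\bot \Leftrightarrow g=\bot$ when $\mathit{seq}$ is present), datatype constructors via corresponding relational liftings, and type variables interpreted by admissible relations $\mathcal{R}$ between closed types (strict, i.e. $(\bot,\bot)\in\mathcal{R}$, in the presence of partiality; strict and total, i.e. $(a,b)\in\mathcal{R}$ implies $a=\bot\Leftrightarrow b=\bot$, in the presence of $\mathit{seq}$); the theorem says every term, with free term variables instantiated by related closed terms, is related to itself at the relational interpretation of its type, and for closed types this relation is the identity. A function $g$ is strict if $g\,\bot=\bot$, and total if $g\,x=\bot$ implies $x=\bot$. $\mathit{id}_{\tau}$ denotes the identity function on type $\tau$. *)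

theory Defs
  imports Main
begin

datatype setting = Total | Partial | WithSeq

text \<open>Type syntax: type variables, base types, function types, datatype constructors
  applied to argument types. The distinguished type variable alpha is TVar 0.\<close>
datatype ('b, 'c) ty =
    TVar nat
  | TBase 'b
  | TFun "('b, 'c) ty" "('b, 'c) ty"
  | TCon 'c "('b, 'c) ty list"

fun closed :: "('b, 'c) ty \<Rightarrow> bool" where
  "closed (TVar n) = False"
| "closed (TBase b) = True"
| "closed (TFun t1 t2) = (closed t1 \<and> closed t2)"
| "closed (TCon c ts) = (\<forall>t\<in>set ts. closed t)"

record ('v, 'b, 'c) lang =
  bottom :: 'v
  app :: "'v \<Rightarrow> 'v \<Rightarrow> 'v"
  below :: "'v \<Rightarrow> 'v \<Rightarrow> bool"
  base_dom :: "'b \<Rightarrow> 'v set"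
  con_rel :: "'c \<Rightarrow> 'v rel list \<Rightarrow> 'v rel"

fun rel :: "('v, 'b, 'c) lang \<Rightarrow> setting \<Rightarrow> (nat \<Rightarrow> 'v rel) \<Rightarrow> ('b, 'c) ty \<Rightarrow> 'v rel" where
  "rel L s \<rho> (TVar n) = \<rho> n"
| "rel L s \<rho> (TBase b) = Id_on (base_dom L b)"
| "rel L s \<rho> (TFun t1 t2) =
     {(f, h). (\<forall>a b. (a, b) \<in> rel L s \<rho> t1 \<longrightarrow> (app L f a, app L h b) \<in> rel L s \<rho> t2)
            \<and> (s = WithSeq \<longrightarrow> (f = bottom L \<longleftrightarrow> h = bottom L))}"
| "rel L s \<rho> (TCon c ts) = con_rel L c (map (rel L s \<rho>) ts)"

definition vals :: "('v, 'b, 'c) lang \<Rightarrow> setting \<Rightarrow> ('b, 'c) ty \<Rightarrow> 'v set" where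
  "vals L s \<tau> = {x. (x, x) \<in> rel L s (\<lambda>_. {}) \<tau>}"

definition is_chain :: "('v, 'b, 'c) lang \<Rightarrow> (nat \<Rightarrow> 'v) \<Rightarrow> bool" where
  "is_chain L X \<longleftrightarrow> (\<forall>i. below L (X i) (X (Suc i)))"

definition lub_of :: "('v, 'b, 'c) lang \<Rightarrow> 'v set \<Rightarrow> 'v \<Rightarrow> bool" where
  "lub_of L S x \<longleftrightarrow> (\<forall>y\<in>S. below L y x) \<and> (\<forall>u. (\<forall>y\<in>S. below L y u) \<longrightarrow> below L x u)"

definition adm_rel :: "('v, 'b, 'c) lang \<Rightarrow> 'v rel \<Rightarrow> bool" where
  "adm_rel L R \<longleftrightarrow> (\<forall>X Y x y. (\<forall>i. (X i, Y i) \<in> R) \<longrightarrow> is_chain L X \<longrightarrow> is_chain L Y \<longrightarrow>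
      lub_of L (range X) x \<longrightarrow> lub_of L (range Y) y \<longrightarrow> (x, y) \<in> R)"

definition allowed :: "('v, 'b, 'c) lang \<Rightarrow> setting \<Rightarrow> 'v rel \<Rightarrow> bool" where
  "allowed L s R \<longleftrightarrow>
     (s \<noteq> Total \<longrightarrow> adm_rel L R \<and> (bottom L, bottom L) \<in> R) \<and>
     (s = WithSeq \<longrightarrow> (\<forall>(a, b)\<in>R. a = bottom L \<longleftrightarrow> b = bottom L))"

text \<open>Standing properties of the language: identity extension (for closed types the
  relational interpretation is the identity) and, in the partial settings, basic
  domain-theoretic facts (antisymmetric order, bottom in every type, value sets closed
  under lubs of chains, continuity of application).\<close>
definition lang_wf :: "('v, 'b, 'c) lang \<Rightarrow> setting \<Rightarrow> bool" where
  "lang_wf L s \<longleftrightarrow>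
     (\<forall>\<rho> \<tau> x y. closed \<tau> \<longrightarrow> (x, y) \<in> rel L s \<rho> \<tau> \<longrightarrow> x = y) \<and>
     (s \<noteq> Total \<longrightarrow>
        (\<forall>x y. below L x y \<longrightarrow> below L y x \<longrightarrow> x = y) \<and>
        (\<forall>\<tau>. closed \<tau> \<longrightarrow> bottom L \<in> vals L s \<tau>) \<and>
        (\<forall>\<tau> X x. closed \<tau> \<longrightarrow> is_chain L X \<longrightarrow> range X \<subseteq> vals L s \<tau> \<longrightarrow>
            lub_of L (range X) x \<longrightarrow> x \<in> vals L s \<tau>) \<and>
        (\<forall>\<tau>1 \<tau>2 f X x. closed \<tau>1 \<longrightarrow> closed \<tau>2 \<longrightarrow> f \<in> vals L s (TFun \<tau>1 \<tau>2) \<longrightarrow>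
            is_chain L X \<longrightarrow> range X \<subseteq> vals L s \<tau>1 \<longrightarrow> lub_of L (range X) x \<longrightarrow>
            lub_of L (range (\<lambda>i. app L f (X i))) (app L f x)))"

text \<open>The fundamental lemma (relational parametricity) instantiated for the term e,
  given by its denotation E: the type substituted for alpha (TVar 0), the values of
  pre :: tau1 -> alpha and post :: alpha -> tau2.\<close>
definition parametric_term ::
  "('v, 'b, 'c) lang \<Rightarrow> setting \<Rightarrow> ('b, 'c) ty \<Rightarrow> ('b, 'c) ty \<Rightarrow> ('b, 'c) ty
     \<Rightarrow> (('b, 'c) ty \<Rightarrow> 'v \<Rightarrow> 'v \<Rightarrow> 'v) \<Rightarrow> bool" where
  "parametric_term L s \<tau>1 \<tau>2 \<tau> E \<longleftrightarrow>
     (\<forall>A B R p p' q q'. closed A \<longrightarrow> closed B \<longrightarrow> R \<subseteq> vals L s A \<times> vals L s B \<longrightarrow>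
        allowed L s R \<longrightarrow>
        (p, p') \<in> rel L s (\<lambda>_. R) (TFun \<tau>1 (TVar 0)) \<longrightarrow>
        (q, q') \<in> rel L s (\<lambda>_. R) (TFun (TVar 0) \<tau>2) \<longrightarrow>
        (E A p q, E B p' q') \<in> rel L s (\<lambda>_. R) \<tau>)"

definition strict_fun :: "('v, 'b, 'c) lang \<Rightarrow> 'v \<Rightarrow> bool" where
  "strict_fun L g \<longleftrightarrow> app L g (bottom L) = bottom L"

definition total_fun :: "('v, 'b, 'c) lang \<Rightarrow> setting \<Rightarrow> ('b, 'c) ty \<Rightarrow> 'v \<Rightarrow> bool" where
  "total_fun L s \<tau>1 g \<longleftrightarrow> (\<forall>x\<in>vals L s \<tau>1. app L g x = bottom L \<longrightarrow> x = bottom L)"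

end

theory Submission
  imports Defs
begin

text \<open>Interpret the type variable alpha by the graph of g, i.e. the relation
  {(x, g x) | x :: tau1}. Then (id, g) are related at tau1 -> alpha and (g, id) at
  alpha -> tau2, so parametricity relates the two instances of e at the closed type tau,
  where the relation is the identity. Strictness of g makes the graph contain
  (bottom, bottom), continuity of application makes it admissible, and in the presence
  of seq totality of g makes it reflect bottom.\<close>

lemma rel_closed_indep: "closed t \<Longrightarrow> rel L s \<rho> t = rel L s \<rho>' t"
proof (induction t)
  case (TCon c ts)
  then have "map (rel L s \<rho>) ts = map (rel L s \<rho>') ts"
    by (intro list.map_cong0) auto
  then show ?case by (simp only: rel.simps)
qed auto

lemma lub_of_unique:
  assumes "\<And>x y. below L x y \<Longrightarrow> below L y x \<Longrightarrow> x = y"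
    and "lub_of L S x" and "lub_of L S y"
  shows "x = y"
  using assms unfolding lub_of_def by blast

lemma lang_wf_rel_closed_iff:
  assumes "lang_wf L s" and "closed \<tau>"
  shows "(x, y) \<in> rel L s \<rho> \<tau> \<longleftrightarrow> x = y \<and> x \<in> vals L s \<tau>"
proof -
  have "rel L s \<rho> \<tau> = rel L s (\<lambda>_. {}) \<tau>"
    using assms(2) by (rule rel_closed_indep)
  moreover have "(x, y) \<in> rel L s \<rho> \<tau> \<Longrightarrow> x = y"
    using assms unfolding lang_wf_def by blast
  ultimately show ?thesis by (auto simp: vals_def)
qed

lemma lang_wf_below_antisym:
  "lang_wf L s \<Longrightarrow> s \<noteq> Total \<Longrightarrow> below L x y \<Longrightarrow> below L y x \<Longrightarrow> x = y"
  unfolding lang_wf_def by blast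

lemma lang_wf_bottom_in_vals:
  "lang_wf L s \<Longrightarrow> s \<noteq> Total \<Longrightarrow> closed \<tau> \<Longrightarrow> bottom L \<in> vals L s \<tau>"
  unfolding lang_wf_def by blast

lemma lang_wf_vals_lub_closed:
  "lang_wf L s \<Longrightarrow> s \<noteq> Total \<Longrightarrow> closed \<tau> \<Longrightarrow> is_chain L X \<Longrightarrow> range X \<subseteq> vals L s \<tau>
    \<Longrightarrow> lub_of L (range X) x \<Longrightarrow> x \<in> vals L s \<tau>"
  unfolding lang_wf_def by blast

lemma lang_wf_app_cont:
  "lang_wf L s \<Longrightarrow> s \<noteq> Total \<Longrightarrow> closed \<tau>1 \<Longrightarrow> closed \<tau>2 \<Longrightarrow> f \<in> vals L s (TFun \<tau>1 \<tau>2)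
    \<Longrightarrow> is_chain L X \<Longrightarrow> range X \<subseteq> vals L s \<tau>1 \<Longrightarrow> lub_of L (range X) x
    \<Longrightarrow> lub_of L (range (\<lambda>i. app L f (X i))) (app L f x)"
  unfolding lang_wf_def by blast

lemma app_in_vals:
  "f \<in> vals L s (TFun \<tau>1 \<tau>2) \<Longrightarrow> x \<in> vals L s \<tau>1 \<Longrightarrow> app L f x \<in> vals L s \<tau>2"
  by (auto simp: vals_def)

definition graph_rel :: "('v, 'b, 'c) lang \<Rightarrow> setting \<Rightarrow> ('b, 'c) ty \<Rightarrow> 'v \<Rightarrow> 'v rel" where
  "graph_rel L s \<tau>1 g = {(x, app L g x) | x. x \<in> vals L s \<tau>1}"

lemma graph_rel_iff: "(x, y) \<in> graph_rel L s \<tau>1 g \<longleftrightarrow> x \<in> vals L s \<tau>1 \<and> y = app L g x"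
  by (auto simp: graph_rel_def)

lemma graph_rel_subset_vals:
  "g \<in> vals L s (TFun \<tau>1 \<tau>2) \<Longrightarrow> graph_rel L s \<tau>1 g \<subseteq> vals L s \<tau>1 \<times> vals L s \<tau>2"
  by (auto simp: graph_rel_iff app_in_vals)

lemma adm_graph_rel:
  assumes wf: "lang_wf L s" and partial: "s \<noteq> Total"
    and cl: "closed \<tau>1" "closed \<tau>2" and g: "g \<in> vals L s (TFun \<tau>1 \<tau>2)"
  shows "adm_rel L (graph_rel L s \<tau>1 g)"
  unfolding adm_rel_def
proof (intro allI impI)
  fix X Y x y
  assume XY: "\<forall>i. (X i, Y i) \<in> graph_rel L s \<tau>1 g" and chain: "is_chain L X"
    and lub_x: "lub_of L (range X) x" and lub_y: "lub_of L (range Y) y"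
  have X_vals: "range X \<subseteq> vals L s \<tau>1" and "Y = (\<lambda>i. app L g (X i))"
    using XY by (auto simp: graph_rel_iff)
  have "lub_of L (range Y) (app L g x)"
    using lang_wf_app_cont[OF wf partial cl g chain X_vals lub_x] \<open>Y = _\<close> by simp
  then have "y = app L g x"
    using lub_of_unique lang_wf_below_antisym[OF wf partial] lub_y by metis
  moreover have "x \<in> vals L s \<tau>1"
    using lang_wf_vals_lub_closed[OF wf partial cl(1) chain X_vals lub_x] .
  ultimately show "(x, y) \<in> graph_rel L s \<tau>1 g"
    by (simp add: graph_rel_iff)
qed

lemma allowed_graph_rel:
  assumes wf: "lang_wf L s" and cl: "closed \<tau>1" "closed \<tau>2"
    and g: "g \<in> vals L s (TFun \<tau>1 \<tau>2)"
    and strict: "s \<noteq> Total \<longrightarrow> strict_fun L g"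
    and total: "s = WithSeq \<longrightarrow> total_fun L s \<tau>1 g"
  shows "allowed L s (graph_rel L s \<tau>1 g)"
proof -
  have "(bottom L, bottom L) \<in> graph_rel L s \<tau>1 g" if "s \<noteq> Total"
    using that strict lang_wf_bottom_in_vals[OF wf that cl(1)]
    by (simp add: graph_rel_iff strict_fun_def)
  moreover have "x = bottom L \<longleftrightarrow> y = bottom L"
    if "s = WithSeq" and "(x, y) \<in> graph_rel L s \<tau>1 g" for x y
    using that strict total by (auto simp: graph_rel_iff strict_fun_def total_fun_def)
  ultimately show ?thesis
    using adm_graph_rel[OF wf _ cl g] unfolding allowed_def by blast
qed

lemma id_graph_rel_related:
  assumes wf: "lang_wf L s" and cl: "closed \<tau>1"
    and id1: "\<forall>x\<in>vals L s \<tau>1. app L id1 x = x"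
    and nonbot: "s = WithSeq \<longrightarrow> id1 \<noteq> bottom L \<and> g \<noteq> bottom L"
  shows "(id1, g) \<in> rel L s (\<lambda>_. graph_rel L s \<tau>1 g) (TFun \<tau>1 (TVar 0))"
  using nonbot id1 by (auto simp: lang_wf_rel_closed_iff[OF wf cl] graph_rel_iff)

lemma graph_rel_id_related:
  assumes wf: "lang_wf L s" and cl: "closed \<tau>2"
    and g: "g \<in> vals L s (TFun \<tau>1 \<tau>2)"
    and id2: "\<forall>x\<in>vals L s \<tau>2. app L id2 x = x"
    and nonbot: "s = WithSeq \<longrightarrow> g \<noteq> bottom L \<and> id2 \<noteq> bottom L"
  shows "(g, id2) \<in> rel L s (\<lambda>_. graph_rel L s \<tau>1 g) (TFun (TVar 0) \<tau>2)"
  using nonbot id2 app_in_vals[OF g]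
  by (auto simp: lang_wf_rel_closed_iff[OF wf cl] graph_rel_iff)

theorem lemma1:
  fixes L :: "('v, 'b, 'c) lang" and s :: setting
    and \<tau> \<tau>1 \<tau>2 :: "('b, 'c) ty"
    and E :: "('b, 'c) ty \<Rightarrow> 'v \<Rightarrow> 'v \<Rightarrow> 'v"
    and g id1 id2 :: 'v
  assumes wf: "lang_wf L s"
    and cl: "closed \<tau>" "closed \<tau>1" "closed \<tau>2"
    and param: "parametric_term L s \<tau>1 \<tau>2 \<tau> E"
    and g_ty: "g \<in> vals L s (TFun \<tau>1 \<tau>2)"
    and id1: "id1 \<in> vals L s (TFun \<tau>1 \<tau>1)" "\<forall>x\<in>vals L s \<tau>1. app L id1 x = x"
    and id2: "id2 \<in> vals L s (TFun \<tau>2 \<tau>2)" "\<forall>x\<in>vals L s \<tau>2. app L id2 x = x"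
    and strict: "s \<noteq> Total \<longrightarrow> strict_fun L g"
    and total: "s = WithSeq \<longrightarrow> total_fun L s \<tau>1 g \<and> g \<noteq> bottom L
                  \<and> id1 \<noteq> bottom L \<and> id2 \<noteq> bottom L"
  shows "E \<tau>1 id1 g = E \<tau>2 g id2"
proof -
  let ?R = "graph_rel L s \<tau>1 g"
  have "allowed L s ?R"
    using allowed_graph_rel[OF wf cl(2,3) g_ty strict] total by blast
  moreover have "(id1, g) \<in> rel L s (\<lambda>_. ?R) (TFun \<tau>1 (TVar 0))"
    using id_graph_rel_related[OF wf cl(2) id1(2)] total by blast
  moreover have "(g, id2) \<in> rel L s (\<lambda>_. ?R) (TFun (TVar 0) \<tau>2)"
    using graph_rel_id_related[OF wf cl(3) g_ty id2(2)] total by blast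
  ultimately have "(E \<tau>1 id1 g, E \<tau>2 g id2) \<in> rel L s (\<lambda>_. ?R) \<tau>"
    using param cl graph_rel_subset_vals[OF g_ty] unfolding parametric_term_def by blast
  then show ?thesis
    by (simp add: lang_wf_rel_closed_iff[OF wf cl(1)])
qed

end
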